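(* Let $d\geqslant1$, let $u_1,\dots,u_d\in\mathbb{Z}^d$ satisfy no nontrivial $\mathbb{Z}$-linear relation, let $\mathcal{L}=\mathbb{Z}u_1+\dots+\mathbb{Z}u_d$ and $P=\mathbb{N}u_1+\dots+\mathbb{N}u_d$. Then: (1) A subset $M\subseteq\mathbb{Z}^d$ is a complement of $P$ in $\mathbb{Z}^d$ if and only if for every coset $c$ of $\mathcal{L}$ in $\mathbb{Z}^d$ and every real number $N$ there exists $x\in M\cap c$ all of whose coordinates with respect to $u_1,\dots,u_d$ are $\leqslant N$. (2) $P$ has complements in $\mathbb{Z}^d$. (3) $P$ has no minimal complement in $\mathbb{Z}^d$. (4) No complement of $P$ in $\mathbb{Z}^d$ contains a minimal complement of $P$.
   Context: $\mathbb{N}=\{0,1,2,\dots\}$. Since $u_1,\dots,u_d$ form a $\mathbb{Q}$-basis of $\mathbb{Q}^d$, each $x\in\mathbb{Z}^d$ can be written uniquely as $x=t_1u_1+\dots+t_du_d$ with $t_i\in\mathbb{Q}$; the $t_i$ are its coordinates with respect to $u_1,\dots,u_d$. A nonempty set $M$ is a complement of $W$ in $\mathbb{Z}^d$ if $W+M=\mathbb{Z}^d$; it is minimal if no proper subset of $M$ is a complement of $W$. *)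

theory Defs
  imports "HOL-Analysis.Analysis"
begin

text \<open>Z^d is modelled as int ^ 'n (d = CARD('n) >= 1, arbitrary).\<close>

definition sumset :: "'a::plus set \<Rightarrow> 'a set \<Rightarrow> 'a set" where
  "sumset A B = {a + b | a b. a \<in> A \<and> b \<in> B}"

definition is_complement :: "(int ^ 'n) set \<Rightarrow> (int ^ 'n) set \<Rightarrow> bool" where
  "is_complement W M \<longleftrightarrow> M \<noteq> {} \<and> sumset W M = UNIV"

definition minimal_complement :: "(int ^ 'n) set \<Rightarrow> (int ^ 'n) set \<Rightarrow> bool" where
  "minimal_complement W M \<longleftrightarrow> is_complement W M \<and> (\<forall>M'. M' \<subset> M \<longrightarrow> \<not> is_complement W M')"

definition Z_independent :: "('n::finite \<Rightarrow> int ^ 'n) \<Rightarrow> bool" where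
  "Z_independent u \<longleftrightarrow> (\<forall>c :: 'n \<Rightarrow> int. (\<Sum>i\<in>UNIV. c i *s u i) = 0 \<longrightarrow> (\<forall>i. c i = 0))"

definition Z_span :: "('n::finite \<Rightarrow> int ^ 'n) \<Rightarrow> (int ^ 'n) set" where
  "Z_span u = {(\<Sum>i\<in>UNIV. c i *s u i) | c :: 'n \<Rightarrow> int. True}"

definition N_span :: "('n::finite \<Rightarrow> int ^ 'n) \<Rightarrow> (int ^ 'n) set" where
  "N_span u = {(\<Sum>i\<in>UNIV. int (c i) *s u i) | c :: 'n \<Rightarrow> nat. True}"

definition rat_vec :: "int ^ 'n \<Rightarrow> rat ^ 'n" where
  "rat_vec x = (\<chi> j. of_int (x $ j))"

definition is_coords :: "('n::finite \<Rightarrow> int ^ 'n) \<Rightarrow> int ^ 'n \<Rightarrow> ('n \<Rightarrow> rat) \<Rightarrow> bool" where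
  "is_coords u x t \<longleftrightarrow> (\<Sum>i\<in>UNIV. t i *s rat_vec (u i)) = rat_vec x"

end

theory Submission
  imports Defs
begin

(* Since the u i are linearly independent, every point of Z^d has unique rational coordinates,
   and z - m lies in P iff it lies in L and has nonnegative coordinates. So z is in P + M iff
   some m in M lies in the coset z + L with coordinates at most those of z, and M is a complement
   iff every coset of L contains points of M with arbitrarily small coordinates. That property
   survives deleting any single point of M, so no complement is minimal; Z^d itself is a
   complement because 0 is in P. *)

lemma mem_sumset_iff:
  fixes z :: "'a::ab_group_add"
  shows "z \<in> sumset W M \<longleftrightarrow> (\<exists>m\<in>M. z - m \<in> W)"
proof
  assume "z \<in> sumset W M"
  then obtain w m where "z = w + m" "w \<in> W" "m \<in> M"
    unfolding sumset_def by blast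
  then show "\<exists>m\<in>M. z - m \<in> W"
    by (metis add_diff_cancel)
next
  assume "\<exists>m\<in>M. z - m \<in> W"
  then obtain m where "m \<in> M" "z - m \<in> W"
    by blast
  then show "z \<in> sumset W M"
    unfolding sumset_def by (intro CollectI exI[of _ "z - m"] exI[of _ m]) simp
qed

lemma rat_vec_add: "rat_vec (x + y) = rat_vec x + rat_vec y"
  by (simp add: rat_vec_def vec_eq_iff)

lemma rat_vec_scale: "rat_vec (c *s x) = of_int c *s rat_vec x"
  by (simp add: rat_vec_def vec_eq_iff)

lemma rat_vec_sum: "rat_vec (\<Sum>i\<in>A. f i) = (\<Sum>i\<in>A. rat_vec (f i))"
  by (induction A rule: infinite_finite_induct) (auto simp: rat_vec_add rat_vec_def vec_eq_iff)

lemma inj_rat_vec: "inj rat_vec"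
  by (rule injI) (simp add: rat_vec_def vec_eq_iff)

lemma add_mem_Z_span:
  assumes "x \<in> Z_span u" "y \<in> Z_span u"
  shows "x + y \<in> Z_span u"
proof -
  obtain a b where "x = (\<Sum>i\<in>UNIV. a i *s u i)" "y = (\<Sum>i\<in>UNIV. b i *s u i)"
    using assms unfolding Z_span_def by blast
  then have "x + y = (\<Sum>i\<in>UNIV. (a i + b i) *s u i)"
    by (simp add: sum.distrib)
  then show ?thesis
    unfolding Z_span_def by (intro CollectI exI[of _ "\<lambda>i. a i + b i"]) simp
qed

lemma uminus_mem_Z_span:
  assumes "x \<in> Z_span u"
  shows "- x \<in> Z_span u"
proof -
  obtain a where "x = (\<Sum>i\<in>UNIV. a i *s u i)"
    using assms unfolding Z_span_def by blast
  then have "- x = (\<Sum>i\<in>UNIV. (- a i) *s u i)"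
    by (simp add: vector_smult_lneg sum_negf)
  then show ?thesis
    unfolding Z_span_def by (intro CollectI exI[of _ "\<lambda>i. - a i"]) simp
qed

lemma diff_mem_Z_span_commute: "x - y \<in> Z_span u \<longleftrightarrow> y - x \<in> Z_span u"
  using uminus_mem_Z_span minus_diff_eq by metis

lemma Z_independent_imp_rat_independent:
  assumes "Z_independent u" and "(\<Sum>i\<in>UNIV. t i *s rat_vec (u i)) = 0"
  shows "t i = 0"
proof -
  define D where "D = (\<Prod>i\<in>UNIV. snd (quotient_of (t i)))"
  have "D > 0"
    unfolding D_def by (intro prod_pos) (simp add: quotient_of_denom_pos')
  have "\<exists>c. of_int c = of_int D * t i" for i
  proof -
    obtain a b where q: "quotient_of (t i) = (a, b)" by fastforce
    have "b dvd D"
      unfolding D_def using q by (metis UNIV_I dvd_prodI finite snd_conv)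
    then obtain k where "D = b * k" by blast
    with quotient_of_div[OF q] quotient_of_denom_pos[OF q] show ?thesis
      by (intro exI[of _ "a * k"]) simp
  qed
  then obtain c where c: "\<And>i. of_int (c i) = of_int D * t i" by metis
  have "rat_vec (\<Sum>i\<in>UNIV. c i *s u i) = of_int D *s (\<Sum>i\<in>UNIV. t i *s rat_vec (u i))"
    by (simp add: rat_vec_sum rat_vec_scale c vec.scale_sum_right)
  also have "\<dots> = rat_vec 0"
    using assms(2) by (simp add: rat_vec_def vec_eq_iff)
  finally have "(\<Sum>i\<in>UNIV. c i *s u i) = 0"
    by (rule injD[OF inj_rat_vec])
  with assms(1) have "c i = 0"
    unfolding Z_independent_def by blast
  with c[of i] \<open>D > 0\<close> show ?thesis by simp
qed

definition coord_matrix :: "('n::finite \<Rightarrow> int ^ 'n) \<Rightarrow> rat ^ 'n ^ 'n" where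
  "coord_matrix u = (\<chi> j i. of_int (u i $ j))"

lemma coord_matrix_mult: "coord_matrix u *v t = (\<Sum>i\<in>UNIV. t $ i *s rat_vec (u i))"
  by (simp add: vec_eq_iff coord_matrix_def matrix_vector_mult_def rat_vec_def mult.commute)

lemma is_coords_exists:
  assumes "Z_independent u"
  shows "\<exists>t. is_coords u x t"
proof -
  have "inj ((*v) (coord_matrix u))"
  proof (rule injI)
    fix a b assume "coord_matrix u *v a = coord_matrix u *v b"
    then have "coord_matrix u *v (a - b) = 0"
      by (simp add: matrix_vector_mult_diff_distrib)
    then have "(\<Sum>i\<in>UNIV. (a - b) $ i *s rat_vec (u i)) = 0"
      unfolding coord_matrix_mult .
    from Z_independent_imp_rat_independent[OF assms this] show "a = b"
      by (simp add: vec_eq_iff)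
  qed
  then have "surj ((*v) (coord_matrix u))"
    by (rule vec.linear_inj_imp_surj[OF matrix_vector_mul_linear_gen])
  then obtain t where "coord_matrix u *v t = rat_vec x"
    by (metis surjD)
  then show ?thesis
    unfolding is_coords_def by (intro exI[of _ "\<lambda>i. t $ i"]) (simp add: coord_matrix_mult)
qed

lemma is_coords_unique:
  assumes "Z_independent u" "is_coords u x t" "is_coords u x s"
  shows "t = s"
proof
  fix i
  have "(\<Sum>i\<in>UNIV. (t i - s i) *s rat_vec (u i)) = 0"
    using assms(2,3) unfolding is_coords_def
    by (simp add: vec.scale_left_diff_distrib sum_subtractf)
  from Z_independent_imp_rat_independent[OF assms(1) this] show "t i = s i" by simp
qed

definition coords :: "('n::finite \<Rightarrow> int ^ 'n) \<Rightarrow> int ^ 'n \<Rightarrow> 'n \<Rightarrow> rat" where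
  "coords u x = (THE t. is_coords u x t)"

lemma is_coords_iff:
  assumes "Z_independent u"
  shows "is_coords u x t \<longleftrightarrow> t = coords u x"
proof -
  obtain s where "is_coords u x s"
    using is_coords_exists[OF assms] by blast
  with is_coords_unique[OF assms] have "is_coords u x (coords u x)"
    unfolding coords_def by (metis theI)
  with is_coords_unique[OF assms] show ?thesis by blast
qed

lemma coords_eqI:
  assumes "Z_independent u" and "is_coords u x t"
  shows "coords u x = t"
  using assms is_coords_iff by metis

lemma coords_add:
  assumes "Z_independent u"
  shows "coords u (x + y) i = coords u x i + coords u y i"
proof -
  have "is_coords u (x + y) (\<lambda>i. coords u x i + coords u y i)"
    using is_coords_iff[OF assms, of x "coords u x"] is_coords_iff[OF assms, of y "coords u y"]
    unfolding is_coords_def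
    by (simp add: rat_vec_add vec.scale_left_distrib sum.distrib)
  then show ?thesis
    by (simp add: coords_eqI[OF assms])
qed

lemma coords_diff:
  assumes "Z_independent u"
  shows "coords u (x - y) i = coords u x i - coords u y i"
proof -
  have "is_coords u (x - y) (\<lambda>i. coords u x i - coords u y i)"
    using is_coords_iff[OF assms, of x "coords u x"] is_coords_iff[OF assms, of y "coords u y"]
    unfolding is_coords_def
    by (simp add: rat_vec_def vec_eq_iff sum_subtractf algebra_simps)
  then show ?thesis
    by (simp add: coords_eqI[OF assms])
qed

lemma coords_lincomb:
  assumes "Z_independent u"
  shows "coords u (\<Sum>i\<in>UNIV. c i *s u i) = (\<lambda>i. of_int (c i))"
  by (rule coords_eqI[OF assms]) (simp add: is_coords_def rat_vec_sum rat_vec_scale)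

lemma N_span_iff_coords_nonneg:
  assumes "Z_independent u"
  shows "y \<in> N_span u \<longleftrightarrow> y \<in> Z_span u \<and> (\<forall>i. coords u y i \<ge> 0)"
proof
  assume "y \<in> N_span u"
  then obtain c where "y = (\<Sum>i\<in>UNIV. int (c i) *s u i)"
    unfolding N_span_def by blast
  then show "y \<in> Z_span u \<and> (\<forall>i. coords u y i \<ge> 0)"
    unfolding Z_span_def by (auto simp: coords_lincomb[OF assms])
next
  assume "y \<in> Z_span u \<and> (\<forall>i. coords u y i \<ge> 0)"
  then obtain c where y: "y = (\<Sum>i\<in>UNIV. c i *s u i)" and "\<forall>i. c i \<ge> 0"
    unfolding Z_span_def by (auto simp: coords_lincomb[OF assms])
  then have "y = (\<Sum>i\<in>UNIV. int (nat (c i)) *s u i)"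
    by simp
  then show "y \<in> N_span u"
    unfolding N_span_def by (intro CollectI exI[of _ "\<lambda>i. nat (c i)"]) simp
qed

lemma mem_sumset_N_span_iff:
  assumes "Z_independent u"
  shows "z \<in> sumset (N_span u) M \<longleftrightarrow>
           (\<exists>m\<in>M. m - z \<in> Z_span u \<and> (\<forall>i. coords u m i \<le> coords u z i))"
  by (simp add: mem_sumset_iff N_span_iff_coords_nonneg[OF assms] coords_diff[OF assms]
      diff_mem_Z_span_commute)

lemma exists_Z_span_translate_coords_le:
  assumes "Z_independent u"
  shows "\<exists>z. z - x \<in> Z_span u \<and> (\<forall>i. of_rat (coords u z i) \<le> (N::real))"
proof -
  define k :: int where "k = \<lceil>Max (range (\<lambda>i. real_of_rat (coords u x i))) - N\<rceil>"
  define z where "z = x + (\<Sum>i\<in>UNIV. (- k) *s u i)"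
  have "z - x \<in> Z_span u"
    unfolding z_def Z_span_def by auto
  moreover have "of_rat (coords u z i) \<le> N" for i
  proof -
    have "real_of_rat (coords u x i) \<le> Max (range (\<lambda>i. real_of_rat (coords u x i)))"
      by simp
    moreover have "Max (range (\<lambda>i. real_of_rat (coords u x i))) - N \<le> of_int k"
      unfolding k_def by (rule le_of_int_ceiling)
    moreover have "real_of_rat (coords u z i) = real_of_rat (coords u x i) - of_int k"
      unfolding z_def by (simp add: coords_add[OF assms] coords_lincomb[OF assms] of_rat_diff)
    ultimately show ?thesis
      by linarith
  qed
  ultimately show ?thesis by blast
qed

lemma is_complement_N_span_iff:
  assumes "Z_independent u"
  shows "is_complement (N_span u) M \<longleftrightarrow>
           (\<forall>x0 (N::real). \<exists>x\<in>M. x - x0 \<in> Z_span u \<and> (\<forall>i. of_rat (coords u x i) \<le> N))"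
proof
  assume complement: "is_complement (N_span u) M"
  show "\<forall>x0 (N::real). \<exists>x\<in>M. x - x0 \<in> Z_span u \<and> (\<forall>i. of_rat (coords u x i) \<le> N)"
  proof (intro allI)
    fix x0 and N :: real
    obtain z where z: "z - x0 \<in> Z_span u" "\<forall>i. of_rat (coords u z i) \<le> N"
      using exists_Z_span_translate_coords_le[OF assms] by blast
    have "z \<in> sumset (N_span u) M"
      using complement by (simp add: is_complement_def)
    then obtain m where m: "m \<in> M" "m - z \<in> Z_span u" "\<forall>i. coords u m i \<le> coords u z i"
      by (auto simp: mem_sumset_N_span_iff[OF assms])
    have "m - x0 \<in> Z_span u"
      using add_mem_Z_span[OF m(2) z(1)] by simp
    moreover have "of_rat (coords u m i) \<le> N" for i
      using m(3) z(2) of_rat_less_eq order_trans by metis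
    ultimately show "\<exists>x\<in>M. x - x0 \<in> Z_span u \<and> (\<forall>i. of_rat (coords u x i) \<le> N)"
      using m(1) by blast
  qed
next
  assume low: "\<forall>x0 (N::real). \<exists>x\<in>M. x - x0 \<in> Z_span u \<and> (\<forall>i. of_rat (coords u x i) \<le> N)"
  have "z \<in> sumset (N_span u) M" for z
  proof -
    obtain x where x: "x \<in> M" "x - z \<in> Z_span u"
      and x_low: "\<forall>i. of_rat (coords u x i) \<le> real_of_rat (Min (range (coords u z)))"
      using low by blast
    have "coords u x i \<le> coords u z i" for i
    proof -
      have "real_of_rat (coords u x i) \<le> real_of_rat (Min (range (coords u z)))"
        using x_low by blast
      also have "\<dots> \<le> real_of_rat (coords u z i)"
        by (simp add: of_rat_less_eq)
      finally show ?thesis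
        by (simp add: of_rat_less_eq)
    qed
    with x show ?thesis
      by (auto simp: mem_sumset_N_span_iff[OF assms])
  qed
  moreover have "M \<noteq> {}"
    using low by blast
  ultimately show "is_complement (N_span u) M"
    by (auto simp: is_complement_def)
qed

lemma is_complement_N_span_Diff_singleton:
  assumes "Z_independent u" and "is_complement (N_span u) M"
  shows "is_complement (N_span u) (M - {m})"
  unfolding is_complement_N_span_iff[OF assms(1)]
proof (intro allI)
  fix x0 and N :: real
  define b where "b = real_of_rat (Min (range (coords u m))) - 1"
  obtain x where x: "x \<in> M" "x - x0 \<in> Z_span u" "\<forall>i. of_rat (coords u x i) \<le> min N b"
    using assms(2) unfolding is_complement_N_span_iff[OF assms(1)] by blast
  have "x \<noteq> m"  \<comment> \<open>x lies strictly below m in every coordinate\<close>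
  proof
    assume "x = m"
    fix i
    have "real_of_rat (coords u m i) \<le> real_of_rat (Min (range (coords u m))) - 1"
      using x(3) \<open>x = m\<close> unfolding b_def by simp
    moreover have "real_of_rat (Min (range (coords u m))) \<le> real_of_rat (coords u m i)"
      by (simp add: of_rat_less_eq)
    ultimately show False
      by linarith
  qed
  with x show "\<exists>x\<in>M - {m}. x - x0 \<in> Z_span u \<and> (\<forall>i. of_rat (coords u x i) \<le> N)"
    by auto
qed

lemma not_minimal_complement_N_span:
  assumes "Z_independent u"
  shows "\<not> minimal_complement (N_span u) M"
proof
  assume minimal: "minimal_complement (N_span u) M"
  then have "is_complement (N_span u) M"
    unfolding minimal_complement_def by blast
  then obtain m where "m \<in> M"
    unfolding is_complement_def by blast
  then have "M - {m} \<subset> M"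
    by blast
  with minimal is_complement_N_span_Diff_singleton[OF assms \<open>is_complement (N_span u) M\<close>]
  show False
    unfolding minimal_complement_def by blast
qed

lemma is_complement_UNIV: "0 \<in> W \<Longrightarrow> is_complement W UNIV"
  unfolding is_complement_def sumset_def by (auto intro: exI[of _ 0])

lemma zero_mem_N_span: "0 \<in> N_span u"
  unfolding N_span_def by (intro CollectI exI[of _ "\<lambda>_. 0"]) simp

theorem proposition3p3:
  fixes u :: "'n::finite \<Rightarrow> int ^ 'n"
  assumes "Z_independent u"
  shows "(\<forall>M :: (int ^ 'n) set.
            is_complement (N_span u) M \<longleftrightarrow>
            (\<forall>x0 :: int ^ 'n. \<forall>N :: real. \<exists>x \<in> M. x - x0 \<in> Z_span u \<and>
                 (\<forall>t. is_coords u x t \<longrightarrow> (\<forall>i. of_rat (t i) \<le> N))))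
       \<and> (\<exists>M. is_complement (N_span u) M)
       \<and> \<not> (\<exists>M. minimal_complement (N_span u) M)
       \<and> (\<forall>M. is_complement (N_span u) M \<longrightarrow>
              \<not> (\<exists>M' \<subseteq> M. minimal_complement (N_span u) M'))"
proof (intro conjI)
  show "\<forall>M. is_complement (N_span u) M \<longleftrightarrow>
          (\<forall>x0 (N::real). \<exists>x\<in>M. x - x0 \<in> Z_span u \<and>
             (\<forall>t. is_coords u x t \<longrightarrow> (\<forall>i. of_rat (t i) \<le> N)))"
    by (simp add: is_complement_N_span_iff[OF assms] is_coords_iff[OF assms])
  show "\<exists>M. is_complement (N_span u) M"
    using is_complement_UNIV[OF zero_mem_N_span] by blast
  show "\<not> (\<exists>M. minimal_complement (N_span u) M)"
    "\<forall>M. is_complement (N_span u) M \<longrightarrow> \<not> (\<exists>M'\<subseteq>M. minimal_complement (N_span u) M')"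
    using not_minimal_complement_N_span[OF assms] by blast+
qed

end
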